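(* Let $p_s\in(0,1)$, $p_f=1-p_s$, and let $p_{-1},p_0,p_1\in[0,1]$ with $p_{-1}+p_0+p_1=1$. Let $(h(t))$ be i.i.d. with $\mathbb{P}[h(t)=1]=p_s$, $\mathbb{P}[h(t)=0]=p_f$, and let $(\delta(t))$ be i.i.d., independent of $(h(t))$, with $\mathbb{P}[\delta(t)=k]=p_k$ for $k\in\{-1,0,1\}$. Define $$\Delta(t)=\begin{cases}\max\{1,\delta(t)+1\}, & h(t)=1,\\ \max\{1,\ \Delta(t-1)+\delta(t)-\delta(t-1)+1\}, & h(t)=0,\end{cases}$$ and $F=1-p_s(1-p_{-1})$. Then in steady state $$\mathbb{P}[\Delta(t)=i]=\begin{cases} p_0p_s+p_{-1}p_s\big(1+p_f(1-p_{-1})\big), & i=1,\\ p_{-1}p_sp_fF+p_0p_sp_f(1-p_{-1})+p_1p_s, & i=2,\\ \big(p_{-1}p_sp_f^2+p_0p_sp_f\big)F+p_1p_sp_f(1-p_{-1}), & i=3,\\ \big(p_{-1}p_sp_f^{\,i-1}+p_0p_sp_f^{\,i-2}+p_1p_sp_f^{\,i-3}\big)F, & i\ge4,\end{cases}$$ and the average AoI is $$\bar\Delta=\sum_{i=1}^\infty i\,\mathbb{P}[\Delta(t)=i]=p_1+\frac{1}{p_s}.$$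
   Context: Model: $h(t)=1$ means successful decoding at the receiver in slot $t$; $\delta(t)\in\{-1,0,1\}$ is the random clock drift (in slots) of the receiver's clock relative to the transmitter's clock; $\Delta(t)$ is the age of information at the receiver. "Steady state" refers to the stationary distribution of the Markov chain $(\delta(t),\Delta(t))$, i.e. the limit as $t\to\infty$. *)

theory Defs
  imports "HOL-Probability.Probability_Mass_Function"
begin

text \<open>One-step transition kernel of the Markov chain (delta(t), Delta(t)).
  From state (d, a) = (delta(t-1), Delta(t-1)) draw h(t) ~ Bernoulli(ps) and,
  independently, delta(t) ~ D; then
  Delta(t) = max 1 (delta(t)+1) if h(t)=1, else max 1 (Delta(t-1)+delta(t)-delta(t-1)+1).\<close>
definition aoi_kernel :: "real \<Rightarrow> int pmf \<Rightarrow> int \<times> nat \<Rightarrow> (int \<times> nat) pmf" where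
  "aoi_kernel ps D = (\<lambda>(d, a).
     bind_pmf (bernoulli_pmf ps) (\<lambda>h.
     bind_pmf D (\<lambda>d'.
       return_pmf (d', if h then nat (max 1 (d' + 1))
                        else nat (max 1 (int a + d' - d + 1))))))"

definition stationary_pmf :: "('s \<Rightarrow> 's pmf) \<Rightarrow> 's pmf \<Rightarrow> bool" where
  "stationary_pmf K \<pi> \<longleftrightarrow> bind_pmf \<pi> K = \<pi>"

definition aoi_ss :: "real \<Rightarrow> real \<Rightarrow> real \<Rightarrow> real \<Rightarrow> nat \<Rightarrow> real" where
  "aoi_ss ps qm q0 q1 i =
    (let pf = 1 - ps; F = 1 - ps * (1 - qm) in
     if i = 1 then q0 * ps + qm * ps * (1 + pf * (1 - qm))
     else if i = 2 then qm * ps * pf * F + q0 * ps * pf * (1 - qm) + q1 * ps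
     else if i = 3 then (qm * ps * pf ^ 2 + q0 * ps * pf) * F + q1 * ps * pf * (1 - qm)
     else (qm * ps * pf ^ (i - 1) + q0 * ps * pf ^ (i - 2) + q1 * ps * pf ^ (i - 3)) * F)"

end

theory Submission
  imports Defs
begin

text \<open>
  Write B(t) = \<Delta>(t) - \<delta>(t) for the drift-corrected age. A success sets B(t) = max 1 (1 - \<delta>(t)),
  a failure sets B(t) = B(t-1) + 1 provided B(t-1) \<ge> 1, because then \<Delta>(t-1) + \<delta>(t) - \<delta>(t-1) + 1
  = B(t-1) + 1 + \<delta>(t) \<ge> 1 and the max in the definition of \<Delta> never clips. Every state in the
  support of a stationary distribution has B \<ge> 1, so there the chain (\<delta>, \<Delta>) is the image of a
  chain (\<delta>, B) in which B(t) depends on B(t-1) and fresh randomness only. The stationary law G of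
  B is determined by the recursion G(x) = p_s P[max 1 (1 - \<delta>) = x] + p_f G(x - 1) with G = 0 for
  x \<le> 0; it exists as a reset value shifted by a geometric number of failures. Conditioning on
  the last slot, \<Delta> = max 1 (1 + \<delta>) after a success and \<Delta> = B(t-1) + 1 + \<delta>(t) after a failure,
  which gives the closed form of P[\<Delta> = i] and, summing the series, the mean.
\<close>

lemma set_pmf_subset_if_sum_pmf_eq_1:
  assumes "finite A" "sum (pmf p) A = 1"
  shows "set_pmf p \<subseteq> A"
proof
  fix x assume x: "x \<in> set_pmf p"
  show "x \<in> A"
  proof (rule ccontr)
    assume "x \<notin> A"
    then have "pmf p x + 1 = measure p (insert x A)"
      using assms by (simp add: measure_measure_pmf_finite)
    also have "\<dots> \<le> 1" by (rule measure_pmf.prob_le_1)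
    finally show False using x by (simp add: set_pmf_iff pmf_nonneg order_less_le)
  qed
qed

lemma pmf_bind_finite_support:
  assumes "finite A" "set_pmf M \<subseteq> A"
  shows "pmf (bind_pmf M f) x = (\<Sum>a\<in>A. pmf M a * pmf (f a) x)"
  unfolding pmf_bind using assms by (subst integral_measure_pmf_real[of A]) (auto simp: mult.commute)

lemma first_order_recurrence_unique:
  fixes f g :: "int \<Rightarrow> 'a::semiring"
  assumes "\<And>x. x \<le> 0 \<Longrightarrow> f x = g x"
    and "\<And>x. 0 < x \<Longrightarrow> f x = r x + c * f (x - 1)"
    and "\<And>x. 0 < x \<Longrightarrow> g x = r x + c * g (x - 1)"
  shows "f = g"
proof
  have nonneg: "f (int n) = g (int n)" for n
  proof (induction n)
    case 0
    then show ?case using assms(1) by simp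
  next
    case (Suc n)
    then show ?case using assms(2,3)[of "int (Suc n)"] by simp
  qed
  fix x
  show "f x = g x"
    using assms(1)[of x] nonneg[of "nat x"] by (cases "x \<le> 0") simp_all
qed

text \<open>After a success \<Delta> = max 1 (d + 1), hence \<Delta> - d = max 1 (1 - d).\<close>

definition reset_age :: "int \<Rightarrow> int" where
  "reset_age d = max 1 (1 - d)"

text \<open>The law of (\<delta>(t), B(t)) given B(t-1) = b.\<close>

definition corrected_kernel :: "real \<Rightarrow> int pmf \<Rightarrow> int \<Rightarrow> (int \<times> int) pmf" where
  "corrected_kernel ps D b =
     bind_pmf (bernoulli_pmf ps) (\<lambda>h. bind_pmf D (\<lambda>d. return_pmf (d, if h then reset_age d else b + 1)))"

definition corrected_step :: "real \<Rightarrow> int pmf \<Rightarrow> int pmf \<Rightarrow> int pmf" where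
  "corrected_step ps D G =
     bind_pmf (bernoulli_pmf ps) (\<lambda>h. if h then map_pmf reset_age D else map_pmf (\<lambda>b. b + 1) G)"

definition corrected_age :: "int \<times> nat \<Rightarrow> int" where
  "corrected_age = (\<lambda>(d, a). int a - d)"

definition aoi_state :: "int \<times> int \<Rightarrow> int \<times> nat" where
  "aoi_state = (\<lambda>(d, b). (d, nat (b + d)))"

lemma set_aoi_kernel:
  assumes "set_pmf D \<subseteq> {-1, 0, 1}" "(d, a) \<in> set_pmf (aoi_kernel ps D (d0, a0))"
  shows "d \<in> {-1, 0, 1}" "1 \<le> a" "d0 \<le> 1 \<Longrightarrow> 1 \<le> a0 \<Longrightarrow> 1 \<le> corrected_age (d, a)"
  using assms by (auto simp: aoi_kernel_def corrected_age_def split: if_splits)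

lemma set_pmf_stationary_aoi:
  assumes "set_pmf D \<subseteq> {-1, 0, 1}" "stationary_pmf (aoi_kernel ps D) \<pi>" "y \<in> set_pmf \<pi>"
  shows "1 \<le> corrected_age y"
proof -
  have reach: "\<exists>y'\<in>set_pmf \<pi>. y \<in> set_pmf (aoi_kernel ps D y')" if "y \<in> set_pmf \<pi>" for y
    using assms(2) that unfolding stationary_pmf_def by (metis UN_E set_bind_pmf)
  obtain d0 a0 where y0: "(d0, a0) \<in> set_pmf \<pi>" "y \<in> set_pmf (aoi_kernel ps D (d0, a0))"
    using reach[OF assms(3)] by auto
  obtain d1 a1 where "(d0, a0) \<in> set_pmf (aoi_kernel ps D (d1, a1))"
    using reach[OF y0(1)] by auto
  then have "d0 \<le> 1" "1 \<le> a0"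
    using set_aoi_kernel(1,2)[OF assms(1)] by force+
  then show ?thesis
    using set_aoi_kernel(3)[OF assms(1)] y0(2) by (cases y) auto
qed

lemma aoi_kernel_eq_corrected:
  assumes "set_pmf D \<subseteq> {-1, 0, 1}" "1 \<le> corrected_age y"
  shows "aoi_kernel ps D y = map_pmf aoi_state (corrected_kernel ps D (corrected_age y))"
  using assms unfolding aoi_kernel_def corrected_kernel_def map_bind_pmf
  by (cases y) (fastforce simp: aoi_state_def reset_age_def corrected_age_def intro!: bind_pmf_cong)

lemma set_bind_corrected_kernel:
  assumes "set_pmf D \<subseteq> {-1, 0, 1}" "set_pmf G \<subseteq> {1..}"
    and "z \<in> set_pmf (bind_pmf G (corrected_kernel ps D))"
  shows "1 \<le> snd z" "0 \<le> snd z + fst z"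
proof -
  obtain b d h where "b \<in> set_pmf G" "d \<in> set_pmf D" "z = (d, if h then reset_age d else b + 1)"
    using assms(3) by (auto simp: corrected_kernel_def)
  moreover from this have "1 \<le> b" "-1 \<le> d"
    using assms(1,2) by auto
  ultimately show "1 \<le> snd z" "0 \<le> snd z + fst z"
    by (auto simp: reset_age_def)
qed

lemma map_snd_bind_corrected_kernel:
  "map_pmf snd (bind_pmf G (corrected_kernel ps D)) = corrected_step ps D G"
proof -
  have "map_pmf snd (bind_pmf G (corrected_kernel ps D)) =
      bind_pmf G (\<lambda>b. bind_pmf (bernoulli_pmf ps) (\<lambda>h. map_pmf (\<lambda>d. if h then reset_age d else b + 1) D))"
    by (simp add: corrected_kernel_def map_bind_pmf map_pmf_def bind_assoc_pmf bind_return_pmf)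
  also have "\<dots> = bind_pmf (bernoulli_pmf ps) (\<lambda>h.
      bind_pmf G (\<lambda>b. map_pmf (\<lambda>d. if h then reset_age d else b + 1) D))"
    by (rule bind_commute_pmf)
  also have "\<dots> = corrected_step ps D G"
    by (auto simp: corrected_step_def bind_pmf_const map_pmf_def intro!: bind_pmf_cong)
  finally show ?thesis .
qed

lemma corrected_age_aoi_state: "0 \<le> b + d \<Longrightarrow> corrected_age (aoi_state (d, b)) = b"
  by (simp add: corrected_age_def aoi_state_def)

lemma stationary_aoi_lumped:
  assumes "set_pmf D \<subseteq> {-1, 0, 1}" "stationary_pmf (aoi_kernel ps D) \<pi>"
  defines "G \<equiv> map_pmf corrected_age \<pi>"
  shows "\<pi> = map_pmf aoi_state (bind_pmf G (corrected_kernel ps D))"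
    and "set_pmf G \<subseteq> {1..}"
    and "corrected_step ps D G = G"
proof -
  have "\<pi> = bind_pmf \<pi> (aoi_kernel ps D)"
    using assms(2) unfolding stationary_pmf_def by simp
  also have "\<dots> = bind_pmf \<pi> (\<lambda>y. map_pmf aoi_state (corrected_kernel ps D (corrected_age y)))"
    using aoi_kernel_eq_corrected[OF assms(1)] set_pmf_stationary_aoi[OF assms(1,2)]
    by (intro bind_pmf_cong) auto
  also have "\<dots> = map_pmf aoi_state (bind_pmf G (corrected_kernel ps D))"
    by (simp add: G_def map_bind_pmf bind_map_pmf)
  finally show \<pi>: "\<pi> = map_pmf aoi_state (bind_pmf G (corrected_kernel ps D))" .
  show G_pos: "set_pmf G \<subseteq> {1..}"
    using set_pmf_stationary_aoi[OF assms(1,2)] by (auto simp: G_def)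
  have "G = map_pmf corrected_age \<pi>"
    by (simp add: G_def)
  also have "\<dots> = map_pmf (corrected_age \<circ> aoi_state) (bind_pmf G (corrected_kernel ps D))"
    by (subst (1) \<pi>) (simp add: map_pmf_comp comp_def)
  also have "\<dots> = map_pmf snd (bind_pmf G (corrected_kernel ps D))"
  proof (rule map_pmf_cong[OF refl])
    fix z assume "z \<in> set_pmf (bind_pmf G (corrected_kernel ps D))"
    then have "0 \<le> snd z + fst z"
      by (rule set_bind_corrected_kernel(2)[OF assms(1) G_pos])
    then show "(corrected_age \<circ> aoi_state) z = snd z"
      by (cases z) (simp add: corrected_age_aoi_state)
  qed
  finally show "corrected_step ps D G = G"
    by (simp add: map_snd_bind_corrected_kernel)
qed

lemma stationary_aoi_of_corrected:
  assumes "set_pmf D \<subseteq> {-1, 0, 1}" "set_pmf G \<subseteq> {1..}" "corrected_step ps D G = G"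
  shows "stationary_pmf (aoi_kernel ps D) (map_pmf aoi_state (bind_pmf G (corrected_kernel ps D)))"
proof -
  let ?M = "bind_pmf G (corrected_kernel ps D)"
  have "bind_pmf (map_pmf aoi_state ?M) (aoi_kernel ps D) =
      bind_pmf ?M (\<lambda>z. map_pmf aoi_state (corrected_kernel ps D (snd z)))"
    unfolding bind_map_pmf
  proof (rule bind_pmf_cong[OF refl])
    fix z assume z: "z \<in> set_pmf ?M"
    have "corrected_age (aoi_state z) = snd z"
      using set_bind_corrected_kernel(2)[OF assms(1,2) z]
      by (cases z) (simp add: corrected_age_aoi_state)
    then show "aoi_kernel ps D (aoi_state z) = map_pmf aoi_state (corrected_kernel ps D (snd z))"
      using aoi_kernel_eq_corrected[OF assms(1), of "aoi_state z"] set_bind_corrected_kernel(1)[OF assms(1,2) z]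
      by simp
  qed
  also have "\<dots> = map_pmf aoi_state (bind_pmf (map_pmf snd ?M) (corrected_kernel ps D))"
    by (simp only: bind_map_pmf map_bind_pmf[of aoi_state])
  also have "\<dots> = map_pmf aoi_state ?M"
    unfolding map_snd_bind_corrected_kernel assms(3) ..
  finally show ?thesis
    unfolding stationary_pmf_def .
qed

definition corrected_stationary :: "real \<Rightarrow> int pmf \<Rightarrow> int pmf" where
  "corrected_stationary ps D = bind_pmf (geometric_pmf ps) (\<lambda>k. map_pmf (\<lambda>d. reset_age d + int k) D)"

lemma set_pmf_corrected_stationary: "set_pmf (corrected_stationary ps D) \<subseteq> {1..}"
  by (auto simp: corrected_stationary_def reset_age_def)

lemma corrected_step_corrected_stationary:
  assumes "0 < ps" "ps \<le> 1"
  shows "corrected_step ps D (corrected_stationary ps D) = corrected_stationary ps D"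
proof -
  have geometric: "geometric_pmf ps =
      bind_pmf (bernoulli_pmf ps) (\<lambda>h. if h then return_pmf 0 else map_pmf Suc (geometric_pmf ps))"
    using geometric_bind_pmf_unfold[of ps] assms by simp
  have "corrected_stationary ps D = bind_pmf (bernoulli_pmf ps) (\<lambda>h.
      bind_pmf (if h then return_pmf 0 else map_pmf Suc (geometric_pmf ps))
        (\<lambda>k. map_pmf (\<lambda>d. reset_age d + int k) D))"
    by (subst corrected_stationary_def, subst geometric) (simp add: bind_assoc_pmf)
  also have "\<dots> = corrected_step ps D (corrected_stationary ps D)"
    unfolding corrected_step_def corrected_stationary_def
    by (auto simp: bind_return_pmf bind_map_pmf map_bind_pmf map_pmf_comp ac_simps intro!: bind_pmf_cong)
  finally show ?thesis ..
qed

lemma pmf_corrected_step: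
  assumes "0 \<le> ps" "ps \<le> 1"
  shows "pmf (corrected_step ps D G) x = ps * pmf (map_pmf reset_age D) x + (1 - ps) * pmf G (x - 1)"
proof -
  have "pmf (map_pmf (\<lambda>b. b + 1) G) ((x - 1) + 1) = pmf G (x - 1)"
    by (rule pmf_map_inj') (simp add: inj_on_def)
  then show ?thesis
    using assms by (simp add: corrected_step_def pmf_bind mult.commute)
qed

lemma pmf_map_reset_age:
  assumes "set_pmf D \<subseteq> {-1, 0, 1}" "pmf D (-1) + pmf D 0 + pmf D 1 = 1"
  shows "pmf (map_pmf reset_age D) x = (if x = 1 then 1 - pmf D (-1) else if x = 2 then pmf D (-1) else 0)"
  using assms unfolding map_pmf_def
  by (subst pmf_bind_finite_support[OF _ assms(1)]) (auto simp: reset_age_def simp del: sum_mult_indicator)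

definition corrected_pmf :: "real \<Rightarrow> real \<Rightarrow> int \<Rightarrow> real" where
  "corrected_pmf ps qm x =
    (if x \<le> 0 then 0 else if x = 1 then ps * (1 - qm)
     else ps * (1 - ps) ^ nat (x - 1) * (1 - qm) + ps * (1 - ps) ^ nat (x - 2) * qm)"

lemma corrected_pmf_recurrence:
  assumes "0 < x"
  shows "corrected_pmf ps qm x =
    ps * (if x = 1 then 1 - qm else if x = 2 then qm else 0) + (1 - ps) * corrected_pmf ps qm (x - 1)"
proof -
  consider "x = 1" | "x = 2" | n where "x = int n + 3"
  proof -
    have "x = 1 \<or> x = 2 \<or> x = int (nat (x - 3)) + 3" using assms by auto
    then show thesis using that by blast
  qed
  then show ?thesis
  proof cases
    case 3
    then have "nat (x - 1) = Suc (Suc n)" "nat (x - 2) = Suc n" by auto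
    with 3 show ?thesis by (simp add: corrected_pmf_def algebra_simps)
  qed (simp_all add: corrected_pmf_def algebra_simps)
qed

lemma pmf_corrected_fixpoint:
  assumes "0 \<le> ps" "ps \<le> 1" "set_pmf D \<subseteq> {-1, 0, 1}" "pmf D (-1) + pmf D 0 + pmf D 1 = 1"
    and "set_pmf G \<subseteq> {1..}" "corrected_step ps D G = G"
  shows "pmf G = corrected_pmf ps (pmf D (-1))"
proof (rule first_order_recurrence_unique)
  fix x :: int
  show "x \<le> 0 \<Longrightarrow> pmf G x = corrected_pmf ps (pmf D (-1)) x"
    using assms(5) by (auto simp: corrected_pmf_def set_pmf_iff)
  show "0 < x \<Longrightarrow> pmf G x =
      ps * (if x = 1 then 1 - pmf D (-1) else if x = 2 then pmf D (-1) else 0)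
      + (1 - ps) * pmf G (x - 1)"
    using pmf_corrected_step[OF assms(1,2), of D G x] pmf_map_reset_age[OF assms(3,4)] assms(6) by simp
  show "0 < x \<Longrightarrow> corrected_pmf ps (pmf D (-1)) x =
      ps * (if x = 1 then 1 - pmf D (-1) else if x = 2 then pmf D (-1) else 0)
      + (1 - ps) * corrected_pmf ps (pmf D (-1)) (x - 1)"
    by (rule corrected_pmf_recurrence)
qed

lemma map_aoi_age_corrected_kernel:
  "map_pmf snd (map_pmf aoi_state (bind_pmf G (corrected_kernel ps D))) =
   bind_pmf (bernoulli_pmf ps) (\<lambda>h. if h then map_pmf (\<lambda>d. nat (reset_age d + d)) D
     else bind_pmf D (\<lambda>d. map_pmf (\<lambda>b. nat (b + (1 + d))) G))"
proof -
  have "map_pmf snd (map_pmf aoi_state (bind_pmf G (corrected_kernel ps D))) =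
      bind_pmf G (\<lambda>b. bind_pmf (bernoulli_pmf ps) (\<lambda>h.
        map_pmf (\<lambda>d. nat ((if h then reset_age d else b + 1) + d)) D))"
    by (simp add: map_pmf_comp aoi_state_def corrected_kernel_def map_bind_pmf map_pmf_def
        bind_assoc_pmf bind_return_pmf)
  also have "\<dots> = bind_pmf (bernoulli_pmf ps) (\<lambda>h. bind_pmf G (\<lambda>b.
      map_pmf (\<lambda>d. nat ((if h then reset_age d else b + 1) + d)) D))"
    by (rule bind_commute_pmf)
  also have "\<dots> = bind_pmf (bernoulli_pmf ps) (\<lambda>h. if h then map_pmf (\<lambda>d. nat (reset_age d + d)) D
      else bind_pmf D (\<lambda>d. map_pmf (\<lambda>b. nat (b + (1 + d))) G))"
  proof (rule bind_pmf_cong[OF refl])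
    fix h
    have "bind_pmf G (\<lambda>b. map_pmf (\<lambda>d. nat (b + (1 + d))) D) =
        bind_pmf D (\<lambda>d. map_pmf (\<lambda>b. nat (b + (1 + d))) G)"
      unfolding map_pmf_def by (rule bind_commute_pmf)
    then show "bind_pmf G (\<lambda>b. map_pmf (\<lambda>d. nat ((if h then reset_age d else b + 1) + d)) D) =
        (if h then map_pmf (\<lambda>d. nat (reset_age d + d)) D
         else bind_pmf D (\<lambda>d. map_pmf (\<lambda>b. nat (b + (1 + d))) G))"
      by (simp add: bind_pmf_const ac_simps)
  qed
  finally show ?thesis .
qed

lemma pmf_aoi_age_corrected_kernel:
  assumes "0 \<le> ps" "ps \<le> 1" "set_pmf D \<subseteq> {-1, 0, 1}" "1 \<le> i"
  shows "pmf (map_pmf snd (map_pmf aoi_state (bind_pmf G (corrected_kernel ps D)))) i =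
    ps * (if i = 1 then pmf D (-1) + pmf D 0 else if i = 2 then pmf D 1 else 0) +
    (1 - ps) * (pmf D (-1) * pmf G (int i) + pmf D 0 * pmf G (int i - 1) + pmf D 1 * pmf G (int i - 2))"
proof -
  have shift: "pmf (map_pmf (\<lambda>b. nat (b + c)) G) i = pmf G (int i - c)" for c
  proof -
    have "(\<lambda>b. nat (b + c)) -` {i} = {int i - c}" using assms(4) by auto
    then show ?thesis by (simp add: pmf_map measure_pmf_single)
  qed
  have success: "pmf (map_pmf (\<lambda>d. nat (reset_age d + d)) D) i =
      (if i = 1 then pmf D (-1) + pmf D 0 else if i = 2 then pmf D 1 else 0)"
    unfolding map_pmf_def using assms(4)
    by (subst pmf_bind_finite_support[OF _ assms(3)]) (auto simp: reset_age_def simp del: sum_mult_indicator)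
  have failure: "pmf (bind_pmf D (\<lambda>d. map_pmf (\<lambda>b. nat (b + (1 + d))) G)) i =
      pmf D (-1) * pmf G (int i) + pmf D 0 * pmf G (int i - 1) + pmf D 1 * pmf G (int i - 2)"
  proof -
    have "pmf (bind_pmf D (\<lambda>d. map_pmf (\<lambda>b. nat (b + (1 + d))) G)) i =
        (\<Sum>d\<in>{-1, 0, 1}. pmf D d * pmf G (int i - (1 + d)))"
      by (subst pmf_bind_finite_support[OF _ assms(3)]) (simp_all only: shift finite.intros)
    then show ?thesis by (simp add: algebra_simps)
  qed
  show ?thesis
    unfolding map_aoi_age_corrected_kernel pmf_bind
    using assms(1,2) success failure by (simp add: mult.commute)
qed

lemma aoi_ss_eq_corrected_pmf:
  fixes ps qm q0 q1 :: real
  assumes "1 \<le> i"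
  shows "aoi_ss ps qm q0 q1 i = ps * (if i = 1 then qm + q0 else if i = 2 then q1 else 0) +
    (1 - ps) * (qm * corrected_pmf ps qm (int i) + q0 * corrected_pmf ps qm (int i - 1)
      + q1 * corrected_pmf ps qm (int i - 2))"
proof -
  consider "i = 1" | "i = 2" | "i = 3" | n where "i = n + 4"
  proof -
    have "i = 1 \<or> i = 2 \<or> i = 3 \<or> i = (i - 4) + 4" using assms by arith
    then show thesis using that by blast
  qed
  then show ?thesis
  proof cases
    case 4
    have closed_forms:
      "corrected_pmf ps qm (int i) = ps * (1 - ps) ^ (n + 3) * (1 - qm) + ps * (1 - ps) ^ (n + 2) * qm"
      "corrected_pmf ps qm (int i - 1) = ps * (1 - ps) ^ (n + 2) * (1 - qm) + ps * (1 - ps) ^ (n + 1) * qm"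
      "corrected_pmf ps qm (int i - 2) = ps * (1 - ps) ^ (n + 1) * (1 - qm) + ps * (1 - ps) ^ n * qm"
      "aoi_ss ps qm q0 q1 i = (qm * ps * (1 - ps) ^ (n + 3) + q0 * ps * (1 - ps) ^ (n + 2)
         + q1 * ps * (1 - ps) ^ (n + 1)) * (1 - ps * (1 - qm))"
      unfolding corrected_pmf_def aoi_ss_def 4 by (simp_all add: Let_def nat_add_distrib ac_simps)
    show ?thesis
      unfolding closed_forms by (simp add: 4 power_add power3_eq_cube power2_eq_square algebra_simps)
  qed (simp_all add: corrected_pmf_def aoi_ss_def Let_def algebra_simps power2_eq_square)
qed

lemma aoi_ss_mean:
  fixes ps qm q0 q1 :: real
  assumes "0 < ps" "ps < 1" "qm + q0 + q1 = 1"
  shows "(\<lambda>i. real i * aoi_ss ps qm q0 q1 i) sums (q1 + 1 / ps)"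
proof -
  define pf where "pf = 1 - ps"
  define K where "K = (1 - ps * (1 - qm)) * ps * pf * (qm * pf^2 + q0 * pf + q1)"
  have pf: "norm pf < 1" "1 - pf = ps" using assms by (auto simp: pf_def)
  have tail: "real (n + 4) * aoi_ss ps qm q0 q1 (n + 4) = K * (of_nat (Suc n) * pf ^ n + 3 * pf ^ n)" for n
    unfolding aoi_ss_def K_def pf_def
    by (simp add: Let_def power_add power3_eq_cube power2_eq_square algebra_simps)
  have "(\<lambda>n. of_nat (Suc n) * pf ^ n + 3 * pf ^ n) sums (1 / ps^2 + 3 * (1 / ps))"
    using sums_add[OF geometric_deriv_sums[OF pf(1)] sums_mult[OF geometric_sums[OF pf(1)], of 3]] pf(2)
    by simp
  then have "(\<lambda>n. real (n + 4) * aoi_ss ps qm q0 q1 (n + 4)) sums (K * (1 / ps^2 + 3 * (1 / ps)))"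
    unfolding tail by (rule sums_mult)
  then have "(\<lambda>i. real i * aoi_ss ps qm q0 q1 i) sums
      (K * (1 / ps^2 + 3 * (1 / ps)) + (\<Sum>i<4. real i * aoi_ss ps qm q0 q1 i))"
    using sums_iff_shift[of "\<lambda>i. real i * aoi_ss ps qm q0 q1 i" 4] by simp
  moreover have "K * (1 / ps^2 + 3 * (1 / ps)) + (\<Sum>i<4. real i * aoi_ss ps qm q0 q1 i) = q1 + 1 / ps"
  proof -
    have q1: "q1 = 1 - qm - q0" using assms(3) by simp
    show ?thesis
      using assms(1) unfolding K_def pf_def aoi_ss_def Let_def q1
      by (simp add: numeral_eq_Suc field_simps power2_eq_square)
  qed
  ultimately show ?thesis by simp
qed

theorem mainTheorem4:
  fixes ps qm q0 q1 :: real and D :: "int pmf"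
  assumes "0 < ps" and "ps < 1"
    and "pmf D (-1) = qm" and "pmf D 0 = q0" and "pmf D 1 = q1"
    and "qm + q0 + q1 = 1"
  shows "(\<exists>\<pi>. stationary_pmf (aoi_kernel ps D) \<pi>) \<and>
         (\<forall>\<pi>. stationary_pmf (aoi_kernel ps D) \<pi> \<longrightarrow>
            (\<forall>i::nat. i \<ge> 1 \<longrightarrow> pmf (map_pmf snd \<pi>) i = aoi_ss ps qm q0 q1 i) \<and>
            (\<lambda>i. real i * pmf (map_pmf snd \<pi>) i) sums (q1 + 1 / ps))"
proof -
  have D_sum: "pmf D (-1) + pmf D 0 + pmf D 1 = 1"
    using assms(3-6) by simp
  then have D: "set_pmf D \<subseteq> {-1, 0, 1}"
    by (intro set_pmf_subset_if_sum_pmf_eq_1) simp_all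
  have "stationary_pmf (aoi_kernel ps D)
      (map_pmf aoi_state (bind_pmf (corrected_stationary ps D) (corrected_kernel ps D)))"
    using assms(1,2) set_pmf_corrected_stationary corrected_step_corrected_stationary
    by (intro stationary_aoi_of_corrected[OF D]) simp_all
  moreover have "(\<forall>i::nat. i \<ge> 1 \<longrightarrow> pmf (map_pmf snd \<pi>) i = aoi_ss ps qm q0 q1 i) \<and>
      (\<lambda>i. real i * pmf (map_pmf snd \<pi>) i) sums (q1 + 1 / ps)"
    if stationary: "stationary_pmf (aoi_kernel ps D) \<pi>" for \<pi>
  proof -
    define G where "G = map_pmf corrected_age \<pi>"
    note lumped = stationary_aoi_lumped[OF D stationary, folded G_def]
    have "pmf G = corrected_pmf ps qm"
      using pmf_corrected_fixpoint[OF _ _ D D_sum lumped(2,3)] assms by simp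
    then have pmf_age: "pmf (map_pmf snd \<pi>) i = aoi_ss ps qm q0 q1 i" if "1 \<le> i" for i
      using pmf_aoi_age_corrected_kernel[OF _ _ D that, of ps G] aoi_ss_eq_corrected_pmf[OF that]
        lumped(1) assms by simp
    then have "(\<lambda>i. real i * pmf (map_pmf snd \<pi>) i) = (\<lambda>i. real i * aoi_ss ps qm q0 q1 i)"
      by (intro ext) (metis less_one not_le of_nat_0 mult_zero_left)
    with pmf_age aoi_ss_mean[OF assms(1,2,6)] show ?thesis
      by simp
  qed
  ultimately show ?thesis
    by blast
qed

end
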